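(* Let $d=2$ and use polar coordinates $(r,\phi)$, $x^1=r\cos\phi$, $x^2=r\sin\phi$. Let $\Lambda\subset\mathbb{R}^2$ be bounded, the closure of an open connected set with piecewise smooth boundary, not containing the origin, and contained in the annulus $\{x:0<R_1<|x|<R_2<\infty\}$. Let $U$ be a smooth function on $(0,\infty)$ and $F(x)=-U'(|x|)\frac{x}{|x|}$. For $x\in\Lambda$ let $y(t,x)$ solve $\frac{d^2y}{dt^2}=F(y)$, $y(0,x)=x$, with initial velocity such that, writing $r(t,x),\phi(t,x)$ for the polar coordinates of $y(t,x)$, $$\frac{dr(0,x)}{dt}=g(|x|)>0,\qquad \frac{d\phi(0,x)}{dt}=h(|x|)$$ for some functions $g,h$ of $|x|$ only. Let $M(r)=r^2h(r)$ and assume that for all $r_2\ge r_1>R_1$, $$-U'(r_2)+\frac{M^2(r_1)}{r_2^3}\ge0.$$ Define $E_0(r)=\frac12g^2(r)+U(r)+\frac12r^2h^2(r)$ and $V(z,r)=U(z)+\frac{r^4h^2(r)}{2z^2}$. If for all $R_1<r_1<R_2$ and all $r_2>r_1$ $$\int_{r_1}^{r_2}\frac{d}{dr_1}\frac{1}{\sqrt{2(E_0(r_1)-V(z,r_1))}}\,dz<\frac{1}{g(r_1)},$$ then there are no collisions: $y(t,x_1)\ne y(t,x_2)$ for all $t\ge0$ and all $x_1\ne x_2$ in $\Lambda$.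
   Context: Each point of $\Lambda$ is a non-interacting unit-mass point particle moving in the central field $F$. *)

theory Defs
  imports "HOL-Analysis.Analysis"
begin

definition polar_pt :: "real \<Rightarrow> real \<Rightarrow> real^2" where
  "polar_pt r phi = vector [r * cos phi, r * sin phi]"

definition central_force :: "(real \<Rightarrow> real) \<Rightarrow> real^2 \<Rightarrow> real^2" where
  "central_force U x = (- deriv U (norm x) / norm x) *\<^sub>R x"

definition piecewise_smooth_boundary :: "(real^2) set \<Rightarrow> bool" where
  "piecewise_smooth_boundary S \<longleftrightarrow>
     (\<exists>P. finite P \<and> (\<forall>p\<in>P. p piecewise_C1_differentiable_on {0..1}) \<and>
          frontier S = (\<Union>p\<in>P. p ` {0..1}))"

definition E0 :: "(real \<Rightarrow> real) \<Rightarrow> (real \<Rightarrow> real) \<Rightarrow> (real \<Rightarrow> real) \<Rightarrow> real \<Rightarrow> real" where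
  "E0 U g h r = (g r)\<^sup>2 / 2 + U r + r\<^sup>2 * (h r)\<^sup>2 / 2"

definition Vpot :: "(real \<Rightarrow> real) \<Rightarrow> (real \<Rightarrow> real) \<Rightarrow> real \<Rightarrow> real \<Rightarrow> real" where
  "Vpot U h z r = U z + r ^ 4 * (h r)\<^sup>2 / (2 * z\<^sup>2)"

definition Mmom :: "(real \<Rightarrow> real) \<Rightarrow> real \<Rightarrow> real" where
  "Mmom h r = r\<^sup>2 * h r"

end

theory Submission
  imports Defs
begin

text \<open>Conservation of energy and angular momentum reduce the motion of each particle to a
  one-dimensional radial motion. The condition on \<open>M\<close> makes the radial kinetic energy
  \<open>E0(r) - V(z, r)\<close> nondecreasing in the radius \<open>z\<close>, so a particle starting at radius \<open>r\<close>
  moves outwards for ever and reaches radius \<open>z\<close> exactly at the escape time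
  \<open>T(r, z) = \<integral>\<^sub>r\<^sup>z dw / sqrt (2 (E0(r) - V(w, r)))\<close>. The integral condition says
  \<open>\<partial>T/\<partial>r < 0\<close>, so particles starting at different radii are never at the same radius.
  Particles starting at the same radius have, at every time, the same radius, radial velocity
  and angular momentum; hence the angle between their position vectors is constant, and they
  can only meet if they started at the same point.\<close>

section \<open>Calculus on the half-line\<close>

lemma has_real_derivative_vec_nth:
  fixes f :: "real \<Rightarrow> real^'n"
  assumes "(f has_vector_derivative v) F"
  shows "((\<lambda>t. f t $ i) has_real_derivative v $ i) F"
  using bounded_linear.has_vector_derivative[OF bounded_linear_vec_nth assms]
  by (simp add: has_real_derivative_iff_has_vector_derivative)

lemma at_within_atLeast_nontrivial: "a \<le> t \<Longrightarrow> at t within {a..} \<noteq> (bot :: real filter)"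
proof -
  assume "a \<le> t"
  then have "at_right t \<le> at t within {a..}" by (intro at_le) auto
  then show ?thesis using trivial_limit_at_right_real[of t] by (metis bot.extremum_uniqueI)
qed

lemma DERIV_nonneg_imp_increasing_atLeast:
  fixes f :: "real \<Rightarrow> real"
  assumes deriv: "\<And>t. a \<le> t \<Longrightarrow> (f has_real_derivative f' t) (at t within {a..})"
    and nonneg: "\<And>t. a \<le> t \<Longrightarrow> 0 \<le> f' t" and "a \<le> s" "s \<le> t"
  shows "f s \<le> f t"
proof (rule DERIV_nonneg_imp_increasing_open[OF \<open>s \<le> t\<close>])
  fix x assume "s < x" "x < t"
  then have "a < x" using \<open>a \<le> s\<close> by simp
  then have "at x within {a..} = at x" by (intro at_within_interior) simp
  with deriv[of x] have "(f has_real_derivative f' x) (at x)" using \<open>a < x\<close> by simp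
  then show "\<exists>y. (f has_real_derivative y) (at x) \<and> 0 \<le> y"
    using nonneg[of x] \<open>a < x\<close> by auto
next
  have "continuous_on {a..} f" using deriv by (intro DERIV_continuous_on[of _ f f']) auto
  then show "continuous_on {s..t} f" by (rule continuous_on_subset) (use \<open>a \<le> s\<close> in auto)
qed

lemma DERIV_zero_imp_constant_atLeast:
  fixes f :: "real \<Rightarrow> real"
  assumes "\<And>t. a \<le> t \<Longrightarrow> (f has_real_derivative 0) (at t within {a..})" and "a \<le> t"
  shows "f t = f a"
  using has_field_derivative_zero_constant[of "{a..}" f] assms by fastforce

lemma positive_if_no_first_zero:
  fixes p :: "real \<Rightarrow> real"
  assumes cont: "continuous_on {0..} p" and p0: "0 < p 0"
    and no_first_zero: "\<And>t. 0 \<le> t \<Longrightarrow> (\<And>s. 0 \<le> s \<Longrightarrow> s < t \<Longrightarrow> 0 < p s) \<Longrightarrow> p t \<noteq> 0"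
    and "0 \<le> t"
  shows "0 < p t"
proof (rule ccontr)
  assume "\<not> 0 < p t"
  have zero_before: "\<exists>m\<in>{0..u}. p m = 0" if "0 \<le> u" "p u \<le> 0" for u
    using IVT2'[of p u 0 0] that p0 continuous_on_subset[OF cont, of "{0..u}"] by fastforce
  define Z where "Z = {s \<in> {0..t}. p s = 0}"
  have "closed Z"
    unfolding Z_def
    by (rule continuous_closed_preimage_constant) (auto intro: continuous_on_subset[OF cont])
  then have "compact Z"
    unfolding Z_def compact_eq_bounded_closed by (auto intro: bounded_subset[of "{0..t}"])
  moreover have "Z \<noteq> {}"
    using zero_before[of t] \<open>0 \<le> t\<close> \<open>\<not> 0 < p t\<close> unfolding Z_def by auto
  ultimately obtain m where m: "m \<in> Z" "\<And>s. s \<in> Z \<Longrightarrow> m \<le> s"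
    by (meson compact_attains_inf)
  have m0: "0 \<le> m" "p m = 0" using m(1) unfolding Z_def by auto
  have "0 < p s" if s: "0 \<le> s" "s < m" for s
  proof (rule ccontr)
    assume "\<not> 0 < p s"
    then obtain s' where s': "s' \<in> {0..s}" "p s' = 0" using zero_before[of s] s by auto
    have "s' \<in> Z" using s' s m(1) unfolding Z_def by auto
    then have "m \<le> s'" by (rule m(2))
    then show False using s' \<open>s < m\<close> by simp
  qed
  then have "p m \<noteq> 0" using no_first_zero[OF m0(1)] by blast
  then show False using m0(2) by contradiction
qed

lemma integral_strict_mono_upper_limit:
  fixes f :: "real \<Rightarrow> real"
  assumes "continuous_on {a..b} f" "\<And>x. a < x \<Longrightarrow> x < b \<Longrightarrow> 0 < f x" "a \<le> u" "u < b"
  shows "integral {a..u} f < integral {a..b} f"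
proof -
  have "0 < integral {u..b} f"
    using integral_less_real[of u b "\<lambda>_. 0" f] assms continuous_on_subset[OF assms(1), of "{u..b}"]
    by auto
  moreover have "integral {a..u} f + integral {u..b} f = integral {a..b} f"
    by (rule Henstock_Kurzweil_Integration.integral_combine)
      (use assms in \<open>auto intro: integrable_continuous_real\<close>)
  ultimately show ?thesis by linarith
qed

lemma continuous_on_pos_if_DERIV:
  assumes "\<And>z. 0 < z \<Longrightarrow> (U has_real_derivative deriv U z) (at z)"
  shows "continuous_on {0<..} U"
  using assms by (intro DERIV_continuous_on[of _ U "deriv U"]) (auto intro: has_field_derivative_at_within)

lemma inner_real2: "u \<bullet> v = u $ 1 * v $ 1 + u $ 2 * v $ 2" for u v :: "real^2"
  by (simp add: inner_vec_def UNIV_2)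

lemma norm_real2: "norm u = sqrt ((u $ 1)\<^sup>2 + (u $ 2)\<^sup>2)" for u :: "real^2"
  by (simp add: norm_eq_sqrt_inner inner_real2 power2_eq_square)

section \<open>Planar motion in a central field\<close>

locale planar_central_motion =
  fixes U :: "real \<Rightarrow> real" and Y1 Y2 V1 V2 :: "real \<Rightarrow> real"
  assumes potential_deriv: "\<And>z. 0 < z \<Longrightarrow> (U has_real_derivative deriv U z) (at z)"
    and position_nonzero: "\<And>t. 0 \<le> t \<Longrightarrow> 0 < (Y1 t)\<^sup>2 + (Y2 t)\<^sup>2"
    and Y1_deriv: "\<And>t. 0 \<le> t \<Longrightarrow> (Y1 has_real_derivative V1 t) (at t within {0..})"
    and Y2_deriv: "\<And>t. 0 \<le> t \<Longrightarrow> (Y2 has_real_derivative V2 t) (at t within {0..})"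
    and V1_deriv: "\<And>t. 0 \<le> t \<Longrightarrow> (V1 has_real_derivative
          - deriv U (sqrt ((Y1 t)\<^sup>2 + (Y2 t)\<^sup>2)) / sqrt ((Y1 t)\<^sup>2 + (Y2 t)\<^sup>2) * Y1 t) (at t within {0..})"
    and V2_deriv: "\<And>t. 0 \<le> t \<Longrightarrow> (V2 has_real_derivative
          - deriv U (sqrt ((Y1 t)\<^sup>2 + (Y2 t)\<^sup>2)) / sqrt ((Y1 t)\<^sup>2 + (Y2 t)\<^sup>2) * Y2 t) (at t within {0..})"
begin

definition radius :: "real \<Rightarrow> real" where
  "radius t = sqrt ((Y1 t)\<^sup>2 + (Y2 t)\<^sup>2)"

definition radial_velocity :: "real \<Rightarrow> real" where
  "radial_velocity t = (Y1 t * V1 t + Y2 t * V2 t) / radius t"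

definition angular_momentum :: "real \<Rightarrow> real" where
  "angular_momentum t = Y1 t * V2 t - Y2 t * V1 t"

definition energy :: "real \<Rightarrow> real" where
  "energy t = ((V1 t)\<^sup>2 + (V2 t)\<^sup>2) / 2 + U (radius t)"

definition radial_kinetic_energy :: "real \<Rightarrow> real" where
  "radial_kinetic_energy z = energy 0 - U z - (angular_momentum 0)\<^sup>2 / (2 * z\<^sup>2)"

lemma radius_pos: "0 \<le> t \<Longrightarrow> 0 < radius t"
  using position_nonzero by (simp add: radius_def)

lemma radius_has_derivative:
  assumes "0 \<le> t"
  shows "(radius has_real_derivative radial_velocity t) (at t within {0..})"
  using position_nonzero[OF assms] radius_pos[OF assms] unfolding radius_def radial_velocity_def
  by (auto intro!: derivative_eq_intros Y1_deriv[OF assms] Y2_deriv[OF assms]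
      simp: power2_eq_square divide_simps)

lemma angular_momentum_eq:
  assumes "0 \<le> t"
  shows "angular_momentum t = angular_momentum 0"
proof (rule DERIV_zero_imp_constant_atLeast[OF _ assms])
  fix t :: real assume "0 \<le> t"
  then show "(angular_momentum has_real_derivative 0) (at t within {0..})"
    unfolding angular_momentum_def
    by (auto intro!: derivative_eq_intros Y1_deriv Y2_deriv V1_deriv V2_deriv simp: algebra_simps)
qed

lemma energy_eq:
  assumes "0 \<le> t"
  shows "energy t = energy 0"
proof (rule DERIV_zero_imp_constant_atLeast[OF _ assms])
  fix t :: real assume t: "0 \<le> t"
  have "((\<lambda>t. U (radius t)) has_real_derivative deriv U (radius t) * radial_velocity t) (at t within {0..})"
    by (rule DERIV_chain2[OF potential_deriv[OF radius_pos[OF t]] radius_has_derivative[OF t]])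
  then show "(energy has_real_derivative 0) (at t within {0..})"
    unfolding energy_def using radius_pos[OF t]
    by (auto intro!: derivative_eq_intros V1_deriv[OF t] V2_deriv[OF t]
        simp: radius_def[symmetric] radial_velocity_def field_simps)
qed

text \<open>Lagrange's identity splits the kinetic energy into its radial and angular parts.\<close>
lemma radial_velocity_sq:
  assumes "0 \<le> t"
  shows "(radial_velocity t)\<^sup>2 = 2 * radial_kinetic_energy (radius t)"
proof -
  have r: "(radius t)\<^sup>2 = (Y1 t)\<^sup>2 + (Y2 t)\<^sup>2" "radius t \<noteq> 0"
    using radius_pos[OF assms] by (auto simp: radius_def)
  have lagrange: "(Y1 t * V1 t + Y2 t * V2 t)\<^sup>2 + (angular_momentum t)\<^sup>2
      = (radius t)\<^sup>2 * ((V1 t)\<^sup>2 + (V2 t)\<^sup>2)"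
    unfolding angular_momentum_def r(1) by algebra
  have "(radial_velocity t)\<^sup>2 = (V1 t)\<^sup>2 + (V2 t)\<^sup>2 - (angular_momentum t)\<^sup>2 / (radius t)\<^sup>2"
    using r(2) unfolding radial_velocity_def
    by (simp add: power_divide field_simps) (use lagrange in \<open>simp add: algebra_simps\<close>)
  also have "\<dots> = 2 * radial_kinetic_energy (radius t)"
    using energy_eq[OF assms] angular_momentum_eq[OF assms]
    unfolding radial_kinetic_energy_def energy_def by (simp add: field_simps)
  finally show ?thesis .
qed

lemma continuous_on_radial_velocity: "continuous_on {0..} radial_velocity"
  unfolding radial_velocity_def using radius_pos
  by (intro continuous_intros DERIV_continuous_on[OF Y1_deriv] DERIV_continuous_on[OF Y2_deriv]
      DERIV_continuous_on[OF V1_deriv] DERIV_continuous_on[OF V2_deriv]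
      DERIV_continuous_on[OF radius_has_derivative]) (auto dest: radius_pos)

lemma continuous_on_radial_kinetic_energy: "continuous_on {0<..} radial_kinetic_energy"
  using continuous_on_pos_if_DERIV[of U] potential_deriv unfolding radial_kinetic_energy_def
  by (intro continuous_intros) auto

lemma polar_initial_data:
  assumes Y0: "Y1 0 = r0 * cos \<phi>0" "Y2 0 = r0 * sin \<phi>0"
    and V0: "V1 0 = g0 * cos \<phi>0 - r0 * h0 * sin \<phi>0" "V2 0 = g0 * sin \<phi>0 + r0 * h0 * cos \<phi>0"
    and "0 < r0"
  shows "radius 0 = r0" "radial_velocity 0 = g0" "angular_momentum 0 = r0\<^sup>2 * h0"
    and "radial_kinetic_energy z = g0\<^sup>2 / 2 + U r0 + r0\<^sup>2 * h0\<^sup>2 / 2 - (U z + r0 ^ 4 * h0\<^sup>2 / (2 * z\<^sup>2))"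
proof -
  have trig: "(sin \<phi>0)\<^sup>2 + (cos \<phi>0)\<^sup>2 = 1" by (rule sin_cos_squared_add)
  show r: "radius 0 = r0"
    unfolding radius_def Y0 using \<open>0 < r0\<close> trig
    by (simp add: power_mult_distrib flip: distrib_left)
  have "Y1 0 * V1 0 + Y2 0 * V2 0 = r0 * g0" unfolding Y0 V0 using trig by algebra
  then show "radial_velocity 0 = g0" unfolding radial_velocity_def r using \<open>0 < r0\<close> by simp
  show L: "angular_momentum 0 = r0\<^sup>2 * h0"
    unfolding angular_momentum_def Y0 V0 using trig by algebra
  have "(V1 0)\<^sup>2 + (V2 0)\<^sup>2 = g0\<^sup>2 + r0\<^sup>2 * h0\<^sup>2" unfolding V0 using trig by algebra
  then show "radial_kinetic_energy z = g0\<^sup>2 / 2 + U r0 + r0\<^sup>2 * h0\<^sup>2 / 2 - (U z + r0 ^ 4 * h0\<^sup>2 / (2 * z\<^sup>2))"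
    unfolding radial_kinetic_energy_def energy_def r L by (simp add: power_mult_distrib field_simps)
qed

end

locale outgoing_central_motion = planar_central_motion +
  assumes initially_outgoing: "0 < radial_velocity 0"
    and radial_kinetic_energy_pos: "\<And>z. radius 0 \<le> z \<Longrightarrow> 0 < radial_kinetic_energy z"
begin

text \<open>While the particle moves outwards its radial kinetic energy stays positive, so the radial
  velocity can never reach zero.\<close>
lemma radial_velocity_pos:
  assumes "0 \<le> t"
  shows "0 < radial_velocity t"
proof (rule positive_if_no_first_zero[OF continuous_on_radial_velocity initially_outgoing _ assms])
  fix t :: real assume t: "0 \<le> t" and before: "\<And>s. 0 \<le> s \<Longrightarrow> s < t \<Longrightarrow> 0 < radial_velocity s"
  have "radius 0 \<le> radius t"
  proof (rule DERIV_nonneg_imp_increasing_open[OF t])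
    fix x assume x: "0 < x" "x < t"
    then have "at x within {0..} = at x" by (intro at_within_interior) simp
    then show "\<exists>y. (radius has_real_derivative y) (at x) \<and> 0 \<le> y"
      using radius_has_derivative[of x] before[of x] x by (auto intro: less_imp_le)
  next
    show "continuous_on {0..t} radius"
      by (intro DERIV_continuous_on[of _ radius radial_velocity])
        (auto intro: has_field_derivative_subset[OF radius_has_derivative])
  qed
  then have "0 < (radial_velocity t)\<^sup>2"
    using radial_velocity_sq[OF t] radial_kinetic_energy_pos by simp
  then show "radial_velocity t \<noteq> 0" by auto
qed

lemma radius_mono: "0 \<le> s \<Longrightarrow> s \<le> t \<Longrightarrow> radius s \<le> radius t"
  using DERIV_nonneg_imp_increasing_atLeast[OF radius_has_derivative] radial_velocity_pos
  by (simp add: less_imp_le)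

lemma radius_ge: "0 \<le> t \<Longrightarrow> radius 0 \<le> radius t"
  using radius_mono[of 0 t] by simp

lemma radial_velocity_eq:
  assumes "0 \<le> t"
  shows "radial_velocity t = sqrt (2 * radial_kinetic_energy (radius t))"
  using radial_velocity_sq[OF assms] radial_velocity_pos[OF assms]
  by (metis less_imp_le real_sqrt_unique)

text \<open>Separation of variables in the radial equation \<open>r' = sqrt (2 * radial_kinetic_energy r)\<close>.\<close>
lemma radius_time_integral:
  assumes "0 \<le> t"
  shows "integral {radius 0..radius t} (\<lambda>z. 1 / sqrt (2 * radial_kinetic_energy z)) = t"
proof -
  define F where "F z = 1 / sqrt (2 * radial_kinetic_energy z)" for z
  have "continuous_on {radius 0..radius t} F"
    unfolding F_def using radius_pos[of 0] radial_kinetic_energy_pos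
    by (intro continuous_intros continuous_on_subset[OF continuous_on_radial_kinetic_energy]) force+
  have deriv: "((\<lambda>\<tau>. integral {radius 0..radius \<tau>} F - \<tau>) has_real_derivative 0) (at \<tau> within {0..t})"
    if \<tau>: "\<tau> \<in> {0..t}" for \<tau>
  proof -
    have image: "radius ` {0..t} \<subseteq> {radius 0..radius t}"
      using radius_ge radius_mono by auto
    have "((\<lambda>u. integral {radius 0..u} F) has_real_derivative F (radius \<tau>)) (at (radius \<tau>) within radius ` {0..t})"
      using integral_has_real_derivative[OF \<open>continuous_on _ F\<close>, of "radius \<tau>"] image \<tau>
      by (blast intro: has_field_derivative_subset)
    moreover have "(radius has_real_derivative radial_velocity \<tau>) (at \<tau> within {0..t})"
      using radius_has_derivative[of \<tau>] \<tau> by (auto intro: has_field_derivative_subset)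
    moreover have "F (radius \<tau>) * radial_velocity \<tau> = 1"
      using radial_velocity_eq[of \<tau>] radial_velocity_pos[of \<tau>] \<tau> unfolding F_def by auto
    ultimately show ?thesis
      using DERIV_image_chain by (fastforce simp: o_def intro!: derivative_eq_intros)
  qed
  have "\<exists>c. \<forall>\<tau>\<in>{0..t}. integral {radius 0..radius \<tau>} F - \<tau> = c"
    by (rule has_field_derivative_zero_constant) (use deriv in auto)
  then obtain c where c: "\<And>\<tau>. \<tau> \<in> {0..t} \<Longrightarrow> integral {radius 0..radius \<tau>} F - \<tau> = c"
    by blast
  from c[of 0] c[of t] assms show ?thesis unfolding F_def by simp
qed

end

section \<open>Differentiating parametric integrals\<close>

lemma open_contains_neighbourhood_of_segment:
  fixes W :: "('a::metric_space \<times> real) set"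
  assumes "open W" and segment: "{x0} \<times> {a..b} \<subseteq> W" and "a \<le> b"
  obtains r c where "0 < r" "c < a" "ball x0 r \<times> {c..b} \<subseteq> W"
proof -
  have "compact ({x0} \<times> {a..b})" by (intro compact_Times) auto
  then obtain e where e: "0 < e" "(\<Union>x\<in>{x0} \<times> {a..b}. ball x e) \<subseteq> W"
    using compact_subset_open_imp_ball_epsilon_subset[OF _ \<open>open W\<close> segment] by blast
  have "ball x0 (e/2) \<times> {a - e/2..b} \<subseteq> W"
  proof clarify
    fix p t assume p: "p \<in> ball x0 (e/2)" and t: "t \<in> {a - e/2..b}"
    define t' where "t' = max a t"
    have "dist (x0, t') (p, t) \<le> dist x0 p + dist t' t"
      unfolding dist_prod_def fst_conv snd_conv by (rule sqrt_sum_squares_le_sum) auto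
    also have "\<dots> < e" using p t e(1) by (auto simp: t'_def dist_real_def)
    finally have "(p, t) \<in> ball (x0, t') e" by simp
    moreover have "(x0, t') \<in> {x0} \<times> {a..b}" using t \<open>a \<le> b\<close> by (auto simp: t'_def)
    ultimately show "(p, t) \<in> W" using e(2) by blast
  qed
  then show thesis using that[of "e/2" "a - e/2"] e(1) by simp
qed

lemma positive_near_segment:
  fixes X :: "'a::metric_space \<Rightarrow> real \<Rightarrow> real"
  assumes X_cont: "continuous_on (UNIV \<times> {0<..}) (\<lambda>(p, w). X p w)"
    and pos: "\<And>w. a \<le> w \<Longrightarrow> w \<le> b \<Longrightarrow> 0 < X q w" and "0 < a" "a \<le> b"
  obtains r c where "0 < r" "0 < c" "c < a" "\<And>p w. p \<in> ball q r \<Longrightarrow> c \<le> w \<Longrightarrow> w \<le> b \<Longrightarrow> 0 < X p w"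
proof -
  define W where "W = (UNIV \<times> {0<..}) \<inter> (\<lambda>(p, w). X p w) -` {0<..}"
  have "open W"
    unfolding W_def by (rule continuous_open_preimage[OF X_cont]) (auto intro: open_Times)
  moreover have "{q} \<times> {a..b} \<subseteq> W" using pos \<open>0 < a\<close> unfolding W_def by auto
  ultimately obtain r c where rc: "0 < r" "c < a" "ball q r \<times> {c..b} \<subseteq> W"
    using open_contains_neighbourhood_of_segment \<open>a \<le> b\<close> by metis
  have "(q, c) \<in> ball q r \<times> {c..b}" using rc(1,2) \<open>a \<le> b\<close> by auto
  then have "(q, c) \<in> W" using rc(3) by blast
  then have "0 < c" unfolding W_def by simp
  moreover have "0 < X p w" if "p \<in> ball q r" "c \<le> w" "w \<le> b" for p w
  proof -
    have "(p, w) \<in> W" using rc(3) that by auto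
    then show ?thesis unfolding W_def by auto
  qed
  ultimately show thesis using that rc(1,2) by blast
qed

lemma continuous_on_slice:
  assumes "continuous_on (D \<times> T) (\<lambda>(p, t). f p t)" "p \<in> D"
  shows "continuous_on T (f p)"
proof -
  have "continuous_on T (\<lambda>t. (\<lambda>(p, t). f p t) (p, t))"
    by (rule continuous_on_compose2[OF assms(1)]) (use assms(2) in \<open>auto intro!: continuous_intros\<close>)
  then show ?thesis by simp
qed

lemma has_derivative_param_integral:
  fixes f :: "'p::banach \<Rightarrow> real \<Rightarrow> real" and fx :: "'p \<Rightarrow> real \<Rightarrow> 'p \<Rightarrow>\<^sub>L real"
  assumes D: "open D" "convex D" "p0 \<in> D"
    and f_cont: "continuous_on (D \<times> {a..b}) (\<lambda>(p, t). f p t)"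
    and f_deriv: "\<And>p t. p \<in> D \<Longrightarrow> t \<in> {a..b} \<Longrightarrow> ((\<lambda>p. f p t) has_derivative blinfun_apply (fx p t)) (at p)"
    and fx_cont: "continuous_on (D \<times> {a..b}) (\<lambda>(p, t). fx p t)"
  shows "((\<lambda>p. integral {a..b} (f p)) has_derivative integral {a..b} (fx p0)) (at p0)"
proof -
  have "((\<lambda>p. integral (cbox a b) (f p)) has_derivative integral (cbox a b) (fx p0)) (at p0 within D)"
    using D f_deriv fx_cont continuous_on_slice[OF f_cont]
    by (intro leibniz_rule) (auto intro: has_derivative_at_withinI integrable_continuous_real)
  then show ?thesis using at_within_open[OF D(3,1)] by (simp add: cbox_interval)
qed

lemma has_derivative_param_integral_upper_limit:
  fixes f :: "'p::banach \<Rightarrow> real \<Rightarrow> real" and fx :: "'p \<Rightarrow> real \<Rightarrow> 'p \<Rightarrow>\<^sub>L real"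
  assumes D: "open D" "convex D" "p0 \<in> D" and w0: "c < w0" "w0 < z"
    and f_cont: "continuous_on (D \<times> {c..z}) (\<lambda>(p, t). f p t)"
    and f_deriv: "\<And>p t. p \<in> D \<Longrightarrow> t \<in> {c..z} \<Longrightarrow> ((\<lambda>p. f p t) has_derivative blinfun_apply (fx p t)) (at p)"
    and fx_cont: "continuous_on (D \<times> {c..z}) (\<lambda>(p, t). fx p t)"
  shows "((\<lambda>(p, w). integral {c..w} (f p)) has_derivative
           (\<lambda>(dp, dw). integral {c..w0} (fx p0) dp + f p0 w0 * dw)) (at (p0, w0))"
proof -
  have sub: "D \<times> {c..w0} \<subseteq> D \<times> {c..z}" using w0 by auto
  have param: "((\<lambda>p. integral {c..w0} (f p)) has_derivative integral {c..w0} (fx p0)) (at p0 within D)"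
    by (rule has_derivative_at_withinI, rule has_derivative_param_integral[OF D
          continuous_on_subset[OF f_cont sub] _ continuous_on_subset[OF fx_cont sub]])
      (use w0 f_deriv in auto)
  have limit: "((\<lambda>w. integral {c..w} (f p)) has_derivative blinfun_apply (blinfun_mult_right (f p w)))
      (at w within {c<..<z})" if "p \<in> D" "w \<in> {c<..<z}" for p w
  proof -
    have "((\<lambda>w. integral {c..w} (f p)) has_real_derivative f p w) (at w within {c..z})"
      by (rule integral_has_real_derivative[OF continuous_on_slice[OF f_cont that(1)]])
        (use that in auto)
    then have "((\<lambda>w. integral {c..w} (f p)) has_real_derivative f p w) (at w within {c<..<z})"
      by (rule has_field_derivative_subset) auto
    then show ?thesis by (simp add: has_field_derivative_def blinfun_mult_right.rep_eq)
  qed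
  have "continuous_on (D \<times> {c<..<z}) (\<lambda>x. blinfun_mult_right ((\<lambda>(p, w). f p w) x))"
    by (rule bounded_linear.continuous_on[OF bounded_linear_blinfun_mult_right
          continuous_on_subset[OF f_cont]]) auto
  then have "continuous (at (p0, w0) within D \<times> {c<..<z}) (\<lambda>(p, w). blinfun_mult_right (f p w))"
    using D w0 unfolding continuous_on_eq_continuous_within split_beta by auto
  then have "((\<lambda>(p, w). integral {c..w} (f p)) has_derivative
      (\<lambda>(dp, dw). integral {c..w0} (fx p0) dp + blinfun_mult_right (f p0 w0) dw)) (at (p0, w0) within D \<times> {c<..<z})"
    using w0 by (intro has_derivative_partialsI[OF param limit]) auto
  moreover have "open (D \<times> {c<..<z})" using D(1) by (intro open_Times) auto
  ultimately show ?thesis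
    using at_within_open[of "(p0, w0)" "D \<times> {c<..<z}"] D w0
    by (simp add: blinfun_mult_right.rep_eq mult.commute)
qed

lemma has_real_derivative_param_integral_lower_limit:
  fixes f :: "'p::banach \<Rightarrow> real \<Rightarrow> real" and fx :: "'p \<Rightarrow> real \<Rightarrow> 'p \<Rightarrow>\<^sub>L real"
  assumes D: "open D" "convex D" "P s0 \<in> D" and s0: "c < s0" "s0 < z"
    and f_cont: "continuous_on (D \<times> {c..z}) (\<lambda>(p, t). f p t)"
    and f_deriv: "\<And>p t. p \<in> D \<Longrightarrow> t \<in> {c..z} \<Longrightarrow> ((\<lambda>p. f p t) has_derivative blinfun_apply (fx p t)) (at p)"
    and fx_cont: "continuous_on (D \<times> {c..z}) (\<lambda>(p, t). fx p t)"
    and P_deriv: "(P has_derivative (\<lambda>h. h *\<^sub>R P')) (at s0)"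
  shows "((\<lambda>s. integral {s..z} (f (P s))) has_real_derivative
           integral {s0..z} (\<lambda>t. fx (P s0) t P') - f (P s0) s0) (at s0)"
proof -
  define p0 where "p0 = P s0"
  have fx_int: "(\<lambda>t. fx p0 t) integrable_on {c..w}" "(\<lambda>t. fx p0 t P') integrable_on {c..w}"
    if "w \<le> z" for w
    using continuous_on_slice[OF fx_cont, of p0] D that unfolding p0_def
    by (auto intro!: integrable_continuous_real continuous_intros intro: continuous_on_subset)
  have whole: "((\<lambda>s. integral {c..z} (f (P s))) has_derivative
      (\<lambda>h. integral {c..z} (fx p0) (h *\<^sub>R P'))) (at s0)"
    using has_derivative_compose[OF P_deriv has_derivative_param_integral[OF D f_cont f_deriv fx_cont]]
    unfolding p0_def by simp
  have "((\<lambda>s. (P s, s)) has_derivative (\<lambda>h. (h *\<^sub>R P', h))) (at s0)"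
    by (rule has_derivative_Pair[OF P_deriv has_derivative_ident])
  from has_derivative_compose[OF this
      has_derivative_param_integral_upper_limit[OF D s0 f_cont f_deriv fx_cont]]
  have initial: "((\<lambda>s. integral {c..s} (f (P s))) has_derivative
      (\<lambda>h. integral {c..s0} (fx p0) (h *\<^sub>R P') + f p0 s0 * h)) (at s0)"
    unfolding p0_def by simp
  have combine: "integral {c..z} (fx p0) P' - integral {c..s0} (fx p0) P'
      = integral {s0..z} (\<lambda>t. fx p0 t P')"
    using Henstock_Kurzweil_Integration.integral_combine[of c s0 z "\<lambda>t. fx p0 t P'"] fx_int s0
    by (simp add: blinfun_apply_integral)
  have split: "integral {c..z} (f (P s)) - integral {c..s} (f (P s)) = integral {s..z} (f (P s))"
    if "P s \<in> D" "c < s" "s < z" for s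
    using Henstock_Kurzweil_Integration.integral_combine[of c s z "f (P s)"] that
      integrable_continuous_real[OF continuous_on_slice[OF f_cont, of "P s"]]
    by auto
  have "\<forall>\<^sub>F s in at s0. P s \<in> D"
    using has_derivative_continuous[OF P_deriv] D(1,3)
    by (auto simp: isCont_def intro: topological_tendstoD)
  moreover have "\<forall>\<^sub>F s in at s0. s \<in> {c<..<z}"
    using s0 by (intro topological_tendstoD[OF tendsto_ident_at]) auto
  ultimately have ev: "\<forall>\<^sub>F s in at s0. integral {c..z} (f (P s)) - integral {c..s} (f (P s))
      = integral {s..z} (f (P s))"
    by eventually_elim (simp add: split)
  have "((\<lambda>s. integral {c..z} (f (P s)) - integral {c..s} (f (P s))) has_real_derivative
      integral {s0..z} (\<lambda>t. fx p0 t P') - f p0 s0) (at s0)"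
    unfolding has_field_derivative_def
    by (rule has_derivative_eq_rhs[OF has_derivative_diff[OF whole initial]])
      (auto simp: fun_eq_iff blinfun.scaleR_right algebra_simps simp flip: combine)
  then show ?thesis
    using has_field_derivative_cong_eventually[OF ev split[OF D(3) s0]] unfolding p0_def by simp
qed

lemma inverse_sqrt_has_derivative:
  "0 < x \<Longrightarrow> ((\<lambda>x. 1 / sqrt x) has_real_derivative - 1 / (2 * x * sqrt x)) (at x)"
  by (auto intro!: derivative_eq_intros simp: field_simps power2_eq_square)

lemma has_real_derivative_integral_inverse_sqrt:
  fixes U :: "real \<Rightarrow> real" and P :: "real \<Rightarrow> real \<times> real"
  defines "X \<equiv> \<lambda>p w. fst p - snd p / w\<^sup>2 - 2 * U w"
  assumes s0: "0 < s0" "s0 < z" and U_cont: "continuous_on {0<..} U"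
    and X_pos: "\<And>w. s0 \<le> w \<Longrightarrow> w \<le> z \<Longrightarrow> 0 < X (P s0) w"
    and P_deriv: "(P has_derivative (\<lambda>h. h *\<^sub>R P')) (at s0)"
  shows "((\<lambda>s. integral {s..z} (\<lambda>w. 1 / sqrt (X (P s) w))) has_real_derivative
      integral {s0..z} (\<lambda>w. (fst P' - snd P' / w\<^sup>2) * (- 1 / (2 * X (P s0) w * sqrt (X (P s0) w))))
      - 1 / sqrt (X (P s0) s0)) (at s0)"
proof -
  have X_cont: "continuous_on (UNIV \<times> {0<..}) (\<lambda>(p, w). X p w)"
    unfolding X_def split_beta
    by (intro continuous_intros continuous_on_compose2[OF U_cont]) auto
  obtain r c where rc: "0 < r" "0 < c" "c < s0"
    and X_pos_near: "\<And>p w. p \<in> ball (P s0) r \<Longrightarrow> c \<le> w \<Longrightarrow> w \<le> z \<Longrightarrow> 0 < X p w"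
  proof (rule positive_near_segment[OF X_cont])
    show "0 < X (P s0) w" if "s0 \<le> w" "w \<le> z" for w using X_pos that .
    show "0 < s0" "s0 \<le> z" using s0 by simp_all
  qed blast
  define D where "D = ball (P s0) r"
  have DW: "0 < w" "0 < X p w" if "p \<in> D" "w \<in> {c..z}" for p w
    using that rc(2) X_pos_near unfolding D_def by auto
  have X_cont_D: "continuous_on (D \<times> {c..z}) (\<lambda>(p, w). X p w)"
    by (rule continuous_on_subset[OF X_cont]) (auto dest: DW)
  define fx where "fx p w = blinfun_inner_left ((- 1 / (2 * X p w * sqrt (X p w))) *\<^sub>R (1 :: real, - 1 / w\<^sup>2))"
    for p w
  have fx_apply: "fx p w (dp :: real \<times> real) = (fst dp - snd dp / w\<^sup>2) * (- 1 / (2 * X p w * sqrt (X p w)))"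
    for p w dp
    unfolding fx_def by (simp add: blinfun_inner_left.rep_eq inner_prod_def algebra_simps diff_divide_distrib)
  have "((\<lambda>s. integral {s..z} (\<lambda>w. 1 / sqrt (X (P s) w))) has_real_derivative
      integral {s0..z} (\<lambda>w. fx (P s0) w P') - 1 / sqrt (X (P s0) s0)) (at s0)"
  proof (rule has_real_derivative_param_integral_lower_limit[where f="\<lambda>p w. 1 / sqrt (X p w)"])
    show "open D" "convex D" "P s0 \<in> D" using rc(1) unfolding D_def by auto
    show "c < s0" "s0 < z" by fact+
    have X_ne: "X (fst x) (snd x) \<noteq> 0" "snd x \<noteq> 0" if "x \<in> D \<times> {c..z}" for x
      using DW[of "fst x" "snd x"] that by (auto simp: mem_Times_iff)
    have "continuous_on (D \<times> {c..z}) (\<lambda>x. 1 / sqrt ((\<lambda>(p, w). X p w) x))"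
      using X_cont_D X_ne by (intro continuous_intros) (auto simp: split_beta)
    then show "continuous_on (D \<times> {c..z}) (\<lambda>(p, w). 1 / sqrt (X p w))"
      by (simp add: split_beta)
    have "continuous_on (D \<times> {c..z}) (\<lambda>x. blinfun_inner_left
        ((- 1 / (2 * (\<lambda>(p, w). X p w) x * sqrt ((\<lambda>(p, w). X p w) x))) *\<^sub>R (1 :: real, - 1 / (snd x)\<^sup>2)))"
      using X_cont_D X_ne
      by (intro continuous_intros bounded_linear.continuous_on[OF bounded_linear_blinfun_inner_left])
        (auto simp: split_beta)
    then show "continuous_on (D \<times> {c..z}) (\<lambda>(p, w). fx p w)"
      by (simp add: fx_def split_beta)
    fix p w assume "p \<in> D" "w \<in> {c..z}"
    then have "0 < X p w" "0 < w" by (auto dest: DW)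
    have "((\<lambda>p. fst p - snd p * (1 / w\<^sup>2) - 2 * U w) has_derivative
        (\<lambda>dp. fst dp - snd dp * (1 / w\<^sup>2) - 0)) (at p)"
      by (intro derivative_intros)
    then have "((\<lambda>p. X p w) has_derivative (\<lambda>dp. fst dp - snd dp / w\<^sup>2)) (at p)"
      unfolding X_def by simp
    note chain = DERIV_compose_FDERIV[OF inverse_sqrt_has_derivative[OF \<open>0 < X p w\<close>] this]
    have "blinfun_apply (fx p w) = (\<lambda>dp. (fst dp - snd dp / w\<^sup>2) * (- 1 / (2 * X p w * sqrt (X p w))))"
      by (rule ext) (rule fx_apply)
    with chain show "((\<lambda>p. 1 / sqrt (X p w)) has_derivative blinfun_apply (fx p w)) (at p)"
      by simp
  qed (rule P_deriv)
  then show ?thesis by (simp add: fx_apply)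
qed

section \<open>The escape time\<close>

definition escape_time :: "(real \<Rightarrow> real) \<Rightarrow> (real \<Rightarrow> real) \<Rightarrow> (real \<Rightarrow> real) \<Rightarrow> real \<Rightarrow> real \<Rightarrow> real"
  where "escape_time U g h r z = integral {r..z} (\<lambda>w. 1 / sqrt (2 * (E0 U g h r - Vpot U h w r)))"

text \<open>The escape time depends on the initial radius \<open>s\<close> only through the pair \<open>P s\<close> below,
  which is why differentiability of \<open>g\<close> and \<open>h\<close> at the single point \<open>s\<close> suffices to
  differentiate under the integral sign.\<close>
lemma escape_time_has_derivative:
  fixes U g h :: "real \<Rightarrow> real"
  assumes s0: "0 < s0" "s0 < z"
    and U_deriv: "\<And>x. 0 < x \<Longrightarrow> (U has_real_derivative deriv U x) (at x)"
    and g_diff: "g differentiable (at s0)" and h_diff: "h differentiable (at s0)"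
    and g_pos: "0 < g s0"
    and energy_pos: "\<And>w. s0 \<le> w \<Longrightarrow> w \<le> z \<Longrightarrow> Vpot U h w s0 < E0 U g h s0"
  shows "((\<lambda>s. escape_time U g h s z) has_real_derivative
      integral {s0..z} (\<lambda>w. deriv (\<lambda>s. 1 / sqrt (2 * (E0 U g h s - Vpot U h w s))) s0) - 1 / g s0)
      (at s0)"
proof -
  define P where "P s = ((g s)\<^sup>2 + 2 * U s + s\<^sup>2 * (h s)\<^sup>2, s ^ 4 * (h s)\<^sup>2)" for s
  define X where "X p w = fst p - snd p / w\<^sup>2 - 2 * U w" for p :: "real \<times> real" and w
  have EV: "2 * (E0 U g h s - Vpot U h w s) = X (P s) w" for s w
    unfolding X_def P_def E0_def Vpot_def by (simp add: field_simps)
  obtain g' h' where g': "(g has_real_derivative g') (at s0)" and h': "(h has_real_derivative h') (at s0)"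
    using g_diff h_diff by (auto simp: real_differentiable_def)
  define P' where "P' = (2 * g s0 * g' + 2 * deriv U s0 + 2 * s0 * (h s0)\<^sup>2 + s0\<^sup>2 * (2 * h s0 * h'),
    4 * s0 ^ 3 * (h s0)\<^sup>2 + s0 ^ 4 * (2 * h s0 * h'))"
  have P_components: "((\<lambda>s. fst (P s)) has_real_derivative fst P') (at s0)"
    "((\<lambda>s. snd (P s)) has_real_derivative snd P') (at s0)"
    unfolding P_def P'_def using g' h' U_deriv[OF s0(1)]
    by (auto intro!: derivative_eq_intros simp: algebra_simps power2_eq_square power3_eq_cube)
  have "((\<lambda>s. (fst (P s), snd (P s))) has_derivative (\<lambda>h. (fst P' * h, snd P' * h))) (at s0)"
    using has_derivative_Pair[OF P_components[unfolded has_field_derivative_def]] .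
  moreover have "(\<lambda>h. (fst P' * h, snd P' * h)) = (\<lambda>h. h *\<^sub>R P')"
    by (simp add: fun_eq_iff prod_eq_iff)
  ultimately have P_deriv: "(P has_derivative (\<lambda>h. h *\<^sub>R P')) (at s0)" by simp
  have X_pos: "0 < X (P s0) w" if "s0 \<le> w" "w \<le> z" for w
    using energy_pos[OF that] by (simp flip: EV)
  have "X (P s0) s0 = (g s0)\<^sup>2"
    using s0 unfolding X_def P_def by (simp add: field_simps power2_eq_square power4_eq_xxxx)
  then have sqrt_X0: "sqrt (X (P s0) s0) = g s0" using g_pos by simp
  have inner_deriv: "(fst P' - snd P' / w\<^sup>2) * (- 1 / (2 * X (P s0) w * sqrt (X (P s0) w)))
      = deriv (\<lambda>s. 1 / sqrt (2 * (E0 U g h s - Vpot U h w s))) s0" if "w \<in> {s0..z}" for w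
  proof -
    have "w \<noteq> 0" using that s0 by auto
    then have "((\<lambda>s. X (P s) w) has_real_derivative fst P' - snd P' / w\<^sup>2) (at s0)"
      unfolding X_def
      by (auto intro!: derivative_eq_intros P_components simp: field_simps eval_nat_numeral)
    from DERIV_chain2[OF inverse_sqrt_has_derivative[OF X_pos] this] that
    show ?thesis unfolding EV by (auto intro!: DERIV_imp_deriv[symmetric] simp: mult.commute)
  qed
  have int_eq: "integral {s0..z} (\<lambda>w. (fst P' - snd P' / w\<^sup>2) * (- 1 / (2 * X (P s0) w * sqrt (X (P s0) w))))
      = integral {s0..z} (\<lambda>w. deriv (\<lambda>s. 1 / sqrt (2 * (E0 U g h s - Vpot U h w s))) s0)"
    by (rule integral_cong) (rule inner_deriv)
  have "((\<lambda>s. integral {s..z} (\<lambda>w. 1 / sqrt (X (P s) w))) has_real_derivative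
      integral {s0..z} (\<lambda>w. (fst P' - snd P' / w\<^sup>2) * (- 1 / (2 * X (P s0) w * sqrt (X (P s0) w))))
      - 1 / sqrt (X (P s0) s0)) (at s0)"
    using has_real_derivative_integral_inverse_sqrt[OF s0 _ _ P_deriv] continuous_on_pos_if_DERIV[of U]
      U_deriv X_pos
    unfolding X_def by blast
  moreover have "(\<lambda>s. escape_time U g h s z) = (\<lambda>s. integral {s..z} (\<lambda>w. 1 / sqrt (X (P s) w)))"
    unfolding escape_time_def EV ..
  ultimately show ?thesis unfolding sqrt_X0 int_eq by simp
qed

lemma Vpot_less_E0:
  assumes U_deriv: "\<And>z. 0 < z \<Longrightarrow> (U has_real_derivative deriv U z) (at z)"
    and r0: "0 < r0" and g_pos: "0 < g r0"
    and M: "\<And>z. r0 \<le> z \<Longrightarrow> 0 \<le> - deriv U z + (Mmom h r0)\<^sup>2 / z ^ 3"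
    and "r0 \<le> z"
  shows "Vpot U h z r0 < E0 U g h r0"
proof -
  define Q where "Q z = E0 U g h r0 - Vpot U h z r0" for z
  have "Q r0 \<le> Q z"
  proof (rule DERIV_nonneg_imp_nondecreasing[OF \<open>r0 \<le> z\<close>])
    fix w assume w: "r0 \<le> w" "w \<le> z"
    have "(Q has_real_derivative - deriv U w + (Mmom h r0)\<^sup>2 / w ^ 3) (at w)"
      unfolding Q_def E0_def Vpot_def Mmom_def using w r0
      by (auto intro!: derivative_eq_intros U_deriv
          simp: field_simps power2_eq_square power3_eq_cube power4_eq_xxxx)
    then show "\<exists>d. (Q has_real_derivative d) (at w) \<and> 0 \<le> d" using M[OF w(1)] by blast
  qed
  moreover have "Q r0 = (g r0)\<^sup>2 / 2"
    using r0 unfolding Q_def E0_def Vpot_def by (simp add: field_simps power2_eq_square power4_eq_xxxx)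
  moreover have "0 < (g r0)\<^sup>2" using g_pos by simp
  ultimately show ?thesis unfolding Q_def by linarith
qed

lemma escape_time_strict_mono:
  assumes U_deriv: "\<And>z. 0 < z \<Longrightarrow> (U has_real_derivative deriv U z) (at z)"
    and r: "0 < r" and energy_pos: "\<And>z. r \<le> z \<Longrightarrow> Vpot U h z r < E0 U g h r"
    and "r \<le> u" "u < v"
  shows "escape_time U g h r u < escape_time U g h r v"
  unfolding escape_time_def
proof (rule integral_strict_mono_upper_limit)
  have "continuous_on {r..v} U"
    using continuous_on_pos_if_DERIV[of U] U_deriv r by (auto intro: continuous_on_subset)
  then have "continuous_on {r..v} (\<lambda>w. Vpot U h w r)"
    unfolding Vpot_def using r by (intro continuous_intros) auto
  then show "continuous_on {r..v} (\<lambda>w. 1 / sqrt (2 * (E0 U g h r - Vpot U h w r)))"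
    using energy_pos by (intro continuous_intros) (auto dest!: energy_pos)
qed (use energy_pos assms(4,5) in auto)

lemma escape_time_strict_antimono:
  assumes "a < b" "b < z"
    and U_deriv: "\<And>x. 0 < x \<Longrightarrow> (U has_real_derivative deriv U x) (at x)"
    and pos: "\<And>s. s \<in> {a..b} \<Longrightarrow> 0 < s" and g_pos: "\<And>s. s \<in> {a..b} \<Longrightarrow> 0 < g s"
    and diff: "\<And>s. s \<in> {a..b} \<Longrightarrow> g differentiable (at s) \<and> h differentiable (at s)"
    and energy_pos: "\<And>s w. s \<in> {a..b} \<Longrightarrow> s \<le> w \<Longrightarrow> Vpot U h w s < E0 U g h s"
    and escape_condition: "\<And>s. s \<in> {a..b} \<Longrightarrow>
      integral {s..z} (\<lambda>w. deriv (\<lambda>s. 1 / sqrt (2 * (E0 U g h s - Vpot U h w s))) s) < 1 / g s"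
  shows "escape_time U g h b z < escape_time U g h a z"
proof (rule DERIV_neg_imp_decreasing[OF \<open>a < b\<close>])
  fix s assume "a \<le> s" "s \<le> b"
  then have s: "s \<in> {a..b}" by simp
  have "((\<lambda>s. escape_time U g h s z) has_real_derivative
      integral {s..z} (\<lambda>w. deriv (\<lambda>s. 1 / sqrt (2 * (E0 U g h s - Vpot U h w s))) s) - 1 / g s) (at s)"
    using escape_time_has_derivative[OF pos[OF s] _ U_deriv] diff[OF s] g_pos[OF s] energy_pos[OF s]
      \<open>s \<le> b\<close> \<open>b < z\<close> by simp
  then show "\<exists>y. ((\<lambda>s. escape_time U g h s z) has_real_derivative y) (at s) \<and> y < 0"
    using escape_condition[OF s] by force
qed

section \<open>Trajectories of the particles\<close>

text \<open>Equal radii, radial velocities and angular momenta force a constant angle between the two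
  position vectors, that is, a constant ratio \<open>a \<bullet> b / |a|\<^sup>2\<close>.\<close>
lemma planar_motions_meet_imp_same_start:
  fixes a b va vb :: "real \<Rightarrow> real^2"
  assumes da: "\<And>t. 0 \<le> t \<Longrightarrow> (a has_vector_derivative va t) (at t within {0..})"
    and db: "\<And>t. 0 \<le> t \<Longrightarrow> (b has_vector_derivative vb t) (at t within {0..})"
    and nonzero: "\<And>t. 0 \<le> t \<Longrightarrow> a t \<noteq> 0"
    and norm_eq: "\<And>t. 0 \<le> t \<Longrightarrow> norm (a t) = norm (b t)"
    and radial_eq: "\<And>t. 0 \<le> t \<Longrightarrow> a t \<bullet> va t = b t \<bullet> vb t"
    and angular_eq: "\<And>t. 0 \<le> t \<Longrightarrow>
      a t $ 1 * va t $ 2 - a t $ 2 * va t $ 1 = b t $ 1 * vb t $ 2 - b t $ 2 * vb t $ 1"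
    and meet: "0 \<le> \<tau>" "a \<tau> = b \<tau>"
  shows "a 0 = b 0"
proof -
  define q where "q t = a t \<bullet> b t / (a t \<bullet> a t)" for t
  have "(q has_real_derivative 0) (at t within {0..})" if t: "0 \<le> t" for t
  proof -
    define A1 where "A1 s = a s $ 1" for s
    define A2 where "A2 s = a s $ 2" for s
    define B1 where "B1 s = b s $ 1" for s
    define B2 where "B2 s = b s $ 2" for s
    note dA1 = has_real_derivative_vec_nth[OF da[OF t], of 1, folded A1_def]
      and dA2 = has_real_derivative_vec_nth[OF da[OF t], of 2, folded A2_def]
      and dB1 = has_real_derivative_vec_nth[OF db[OF t], of 1, folded B1_def]
      and dB2 = has_real_derivative_vec_nth[OF db[OF t], of 2, folded B2_def]
    have radial: "A1 t * va t $ 1 + A2 t * va t $ 2 = B1 t * vb t $ 1 + B2 t * vb t $ 2"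
      using radial_eq[OF t] unfolding A1_def A2_def B1_def B2_def by (simp add: inner_real2)
    have angular: "A1 t * va t $ 2 - A2 t * va t $ 1 = B1 t * vb t $ 2 - B2 t * vb t $ 1"
      using angular_eq[OF t] unfolding A1_def A2_def B1_def B2_def .
    have sq: "A1 t * A1 t + A2 t * A2 t = B1 t * B1 t + B2 t * B2 t"
      using norm_eq[OF t] unfolding A1_def A2_def B1_def B2_def
      by (metis inner_real2 norm_eq_sqrt_inner real_sqrt_eq_iff)
    have N: "A1 t * A1 t + A2 t * A2 t \<noteq> 0"
      using nonzero[OF t] unfolding A1_def A2_def by (metis inner_real2 inner_eq_zero_iff)
    have "(va t $ 1 * B1 t + vb t $ 1 * A1 t + (va t $ 2 * B2 t + vb t $ 2 * A2 t)) * (A1 t * A1 t + A2 t * A2 t)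
        - (A1 t * B1 t + A2 t * B2 t) * (va t $ 1 * A1 t + va t $ 1 * A1 t + (va t $ 2 * A2 t + va t $ 2 * A2 t))
        = 0"
      using radial angular sq by algebra
    then show ?thesis
      using DERIV_divide[OF DERIV_add[OF DERIV_mult[OF dA1 dB1] DERIV_mult[OF dA2 dB2]]
          DERIV_add[OF DERIV_mult[OF dA1 dA1] DERIV_mult[OF dA2 dA2]] N]
      unfolding q_def inner_real2 A1_def A2_def B1_def B2_def by simp
  qed
  then have "q 0 = q \<tau>" using DERIV_zero_imp_constant_atLeast[of 0 q \<tau>] meet(1) by simp
  also have "\<dots> = 1" using meet nonzero[of \<tau>] unfolding q_def by simp
  finally have "a 0 \<bullet> b 0 = a 0 \<bullet> a 0" using nonzero[of 0] unfolding q_def by simp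
  moreover have "b 0 \<bullet> b 0 = a 0 \<bullet> a 0" using norm_eq[of 0] by (simp add: dot_square_norm)
  ultimately have "(a 0 - b 0) \<bullet> (a 0 - b 0) = 0" by (simp add: inner_diff inner_commute)
  then show ?thesis by simp
qed

lemma polar_initial_velocity:
  fixes y :: "real \<Rightarrow> real^2"
  assumes y_deriv: "(y has_vector_derivative v) (at 0 within {0..})"
    and polar: "\<And>t. 0 \<le> t \<Longrightarrow> y t = polar_pt (norm (y t)) (\<phi> t)"
    and radial: "((\<lambda>t. norm (y t)) has_real_derivative \<rho>') (at 0 within {0..})"
    and angular: "(\<phi> has_real_derivative \<phi>') (at 0 within {0..})"
  shows "v $ 1 = \<rho>' * cos (\<phi> 0) - norm (y 0) * \<phi>' * sin (\<phi> 0)"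
    and "v $ 2 = \<rho>' * sin (\<phi> 0) + norm (y 0) * \<phi>' * cos (\<phi> 0)"
proof -
  have components: "y t $ 1 = norm (y t) * cos (\<phi> t)" "y t $ 2 = norm (y t) * sin (\<phi> t)" if "0 \<le> t" for t
    by (subst polar[OF that], simp add: polar_pt_def)+
  have "((\<lambda>t. norm (y t) * cos (\<phi> t)) has_real_derivative \<rho>' * cos (\<phi> 0) - norm (y 0) * \<phi>' * sin (\<phi> 0))
      (at 0 within {0..})"
    using radial angular by (auto intro!: derivative_eq_intros simp: algebra_simps)
  then have "((\<lambda>t. y t $ 1) has_real_derivative \<rho>' * cos (\<phi> 0) - norm (y 0) * \<phi>' * sin (\<phi> 0))
      (at 0 within {0..})"
    by (rule has_field_derivative_transform_within[where d=1]) (use components in auto)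
  then show "v $ 1 = \<rho>' * cos (\<phi> 0) - norm (y 0) * \<phi>' * sin (\<phi> 0)"
    using has_field_derivative_unique[OF has_real_derivative_vec_nth[OF y_deriv]]
      at_within_atLeast_nontrivial[of 0 0] by auto
  have "((\<lambda>t. norm (y t) * sin (\<phi> t)) has_real_derivative \<rho>' * sin (\<phi> 0) + norm (y 0) * \<phi>' * cos (\<phi> 0))
      (at 0 within {0..})"
    using radial angular by (auto intro!: derivative_eq_intros simp: algebra_simps)
  then have "((\<lambda>t. y t $ 2) has_real_derivative \<rho>' * sin (\<phi> 0) + norm (y 0) * \<phi>' * cos (\<phi> 0))
      (at 0 within {0..})"
    by (rule has_field_derivative_transform_within[where d=1]) (use components in auto)
  then show "v $ 2 = \<rho>' * sin (\<phi> 0) + norm (y 0) * \<phi>' * cos (\<phi> 0)"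
    using has_field_derivative_unique[OF has_real_derivative_vec_nth[OF y_deriv]]
      at_within_atLeast_nontrivial[of 0 0] by auto
qed

lemma central_force_motion_components:
  fixes y y' :: "real \<Rightarrow> real^2"
  assumes U_deriv: "\<And>z. 0 < z \<Longrightarrow> (U has_real_derivative deriv U z) (at z)"
    and motion: "\<And>t. 0 \<le> t \<Longrightarrow> y t \<noteq> 0 \<and> (y has_vector_derivative y' t) (at t within {0..}) \<and>
        (y' has_vector_derivative central_force U (y t)) (at t within {0..})"
  shows "planar_central_motion U (\<lambda>t. y t $ 1) (\<lambda>t. y t $ 2) (\<lambda>t. y' t $ 1) (\<lambda>t. y' t $ 2)"
proof
  fix t :: real assume t: "0 \<le> t"
  show "0 < (y t $ 1)\<^sup>2 + (y t $ 2)\<^sup>2"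
    using motion[OF t] by (metis norm_real2 zero_less_norm_iff real_sqrt_gt_0_iff)
  show "((\<lambda>t. y t $ 1) has_real_derivative y' t $ 1) (at t within {0..})"
    "((\<lambda>t. y t $ 2) has_real_derivative y' t $ 2) (at t within {0..})"
    using motion[OF t] by (auto intro: has_real_derivative_vec_nth)
  show "((\<lambda>t. y' t $ 1) has_real_derivative
      - deriv U (sqrt ((y t $ 1)\<^sup>2 + (y t $ 2)\<^sup>2)) / sqrt ((y t $ 1)\<^sup>2 + (y t $ 2)\<^sup>2) * y t $ 1)
      (at t within {0..})"
    "((\<lambda>t. y' t $ 2) has_real_derivative
      - deriv U (sqrt ((y t $ 1)\<^sup>2 + (y t $ 2)\<^sup>2)) / sqrt ((y t $ 1)\<^sup>2 + (y t $ 2)\<^sup>2) * y t $ 2)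
      (at t within {0..})"
    using has_real_derivative_vec_nth[of y' "central_force U (y t)"] motion[OF t]
    by (auto simp: central_force_def norm_real2)
qed (rule U_deriv)

lemma central_trajectory:
  fixes y y' :: "real \<Rightarrow> real^2" and \<phi> :: "real \<Rightarrow> real"
  defines "r0 \<equiv> norm (y 0)"
  assumes U_deriv: "\<And>z. 0 < z \<Longrightarrow> (U has_real_derivative deriv U z) (at z)"
    and motion: "\<And>t. 0 \<le> t \<Longrightarrow> y t \<noteq> 0 \<and> (y has_vector_derivative y' t) (at t within {0..}) \<and>
        (y' has_vector_derivative central_force U (y t)) (at t within {0..})"
    and polar: "\<And>t. 0 \<le> t \<Longrightarrow> y t = polar_pt (norm (y t)) (\<phi> t)"
    and radial0: "((\<lambda>t. norm (y t)) has_real_derivative g r0) (at 0 within {0..})"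
    and angular0: "(\<phi> has_real_derivative h r0) (at 0 within {0..})"
    and g_pos: "0 < g r0"
    and energy_pos: "\<And>z. r0 \<le> z \<Longrightarrow> Vpot U h z r0 < E0 U g h r0"
    and "0 \<le> t"
  shows "r0 \<le> norm (y t)" "escape_time U g h r0 (norm (y t)) = t"
    and "y t \<bullet> y' t = norm (y t) * sqrt (2 * (E0 U g h r0 - Vpot U h (norm (y t)) r0))"
    and "y t $ 1 * y' t $ 2 - y t $ 2 * y' t $ 1 = Mmom h r0"
proof -
  interpret planar_central_motion U "\<lambda>t. y t $ 1" "\<lambda>t. y t $ 2" "\<lambda>t. y' t $ 1" "\<lambda>t. y' t $ 2"
    by (rule central_force_motion_components[OF U_deriv motion])
  have radius_norm: "radius s = norm (y s)" for s by (simp add: radius_def norm_real2)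
  have "0 < r0" using motion[of 0] unfolding r0_def by simp
  have "y 0 $ 1 = polar_pt r0 (\<phi> 0) $ 1" "y 0 $ 2 = polar_pt r0 (\<phi> 0) $ 2"
    unfolding r0_def using polar[of 0] by (metis order_refl)+
  then have Y0: "y 0 $ 1 = r0 * cos (\<phi> 0)" "y 0 $ 2 = r0 * sin (\<phi> 0)"
    by (simp_all add: polar_pt_def)
  have V0: "y' 0 $ 1 = g r0 * cos (\<phi> 0) - r0 * h r0 * sin (\<phi> 0)"
    "y' 0 $ 2 = g r0 * sin (\<phi> 0) + r0 * h r0 * cos (\<phi> 0)"
    using polar_initial_velocity[OF _ polar radial0 angular0] motion[of 0] unfolding r0_def by auto
  note initial = polar_initial_data[OF Y0 V0 \<open>0 < r0\<close>]
  have initial_data: "radius 0 = r0" "radial_velocity 0 = g r0" "angular_momentum 0 = r0\<^sup>2 * h r0"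
    "radial_kinetic_energy z = E0 U g h r0 - Vpot U h z r0" for z
    using initial by (simp_all add: E0_def Vpot_def)
  interpret outgoing_central_motion U "\<lambda>t. y t $ 1" "\<lambda>t. y t $ 2" "\<lambda>t. y' t $ 1" "\<lambda>t. y' t $ 2"
    using g_pos energy_pos by unfold_locales (simp_all add: initial_data)
  show "r0 \<le> norm (y t)" using radius_ge[OF \<open>0 \<le> t\<close>] by (simp add: radius_norm r0_def)
  show "escape_time U g h r0 (norm (y t)) = t"
    using radius_time_integral[OF \<open>0 \<le> t\<close>] initial_data(1,4)
    by (simp add: escape_time_def radius_norm)
  show "y t \<bullet> y' t = norm (y t) * sqrt (2 * (E0 U g h r0 - Vpot U h (norm (y t)) r0))"
    using radial_velocity_eq[OF \<open>0 \<le> t\<close>] radius_pos[OF \<open>0 \<le> t\<close>]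
    by (simp add: radial_velocity_def inner_real2 initial_data radius_norm field_simps)
  show "y t $ 1 * y' t $ 2 - y t $ 2 * y' t $ 1 = Mmom h r0"
    using angular_momentum_eq[OF \<open>0 \<le> t\<close>] initial_data(3) by (simp add: angular_momentum_def Mmom_def)
qed

text \<open>Of the hypotheses of the theorem only these enter the proof: of \<open>\<Lambda>\<close> only its
  connectedness is used (it makes the set of initial radii an interval), of \<open>U\<close> only its first
  derivative.\<close>
locale escaping_particles =
  fixes \<Lambda> :: "(real^2) set" and R1 R2 :: real and U g h :: "real \<Rightarrow> real"
    and y :: "real \<Rightarrow> real^2 \<Rightarrow> real^2"
  assumes connected: "connected \<Lambda>"
    and R1_pos: "0 < R1"
    and annulus: "\<And>x. x \<in> \<Lambda> \<Longrightarrow> R1 < norm x \<and> norm x < R2"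
    and U_deriv: "\<And>z. 0 < z \<Longrightarrow> (U has_real_derivative deriv U z) (at z)"
    and motion: "\<And>x. x \<in> \<Lambda> \<Longrightarrow> \<exists>y'. y 0 x = x \<and> (\<forall>t\<ge>0. y t x \<noteq> 0 \<and>
        ((\<lambda>s. y s x) has_vector_derivative y' t) (at t within {0..}) \<and>
        (y' has_vector_derivative central_force U (y t x)) (at t within {0..}))"
    and initial_velocity: "\<And>x. x \<in> \<Lambda> \<Longrightarrow> \<exists>\<phi>. (\<forall>t\<ge>0. y t x = polar_pt (norm (y t x)) (\<phi> t)) \<and>
        ((\<lambda>t. norm (y t x)) has_real_derivative g (norm x)) (at 0 within {0..}) \<and>
        (\<phi> has_real_derivative h (norm x)) (at 0 within {0..})"
    and g_pos: "\<And>x. x \<in> \<Lambda> \<Longrightarrow> 0 < g (norm x)"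
    and gh_diff: "\<And>r. R1 < r \<Longrightarrow> r < R2 \<Longrightarrow> g differentiable (at r) \<and> h differentiable (at r)"
    and M_cond: "\<And>r1 r2. R1 < r1 \<Longrightarrow> r1 \<le> r2 \<Longrightarrow> 0 \<le> - deriv U r2 + (Mmom h r1)\<^sup>2 / r2 ^ 3"
    and escape_condition: "\<And>r1 r2. R1 < r1 \<Longrightarrow> r1 < R2 \<Longrightarrow> r1 < r2 \<Longrightarrow>
        integral {r1..r2} (\<lambda>z. deriv (\<lambda>s. 1 / sqrt (2 * (E0 U g h s - Vpot U h z s))) r1) < 1 / g r1"
begin

lemma energy_pos:
  assumes "x \<in> \<Lambda>" "norm x \<le> z"
  shows "Vpot U h z (norm x) < E0 U g h (norm x)"
  using annulus[OF assms(1)] R1_pos g_pos[OF assms(1)] M_cond[of "norm x"] assms(2)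
  by (intro Vpot_less_E0[where U=U] U_deriv) auto

lemma trajectory:
  assumes "x \<in> \<Lambda>"
  obtains y' where "\<And>t. 0 \<le> t \<Longrightarrow> ((\<lambda>s. y s x) has_vector_derivative y' t) (at t within {0..})"
    and "\<And>t. 0 \<le> t \<Longrightarrow> norm x \<le> norm (y t x)"
    and "\<And>t. 0 \<le> t \<Longrightarrow> escape_time U g h (norm x) (norm (y t x)) = t"
    and "\<And>t. 0 \<le> t \<Longrightarrow> y t x \<bullet> y' t = norm (y t x) * sqrt (2 * (E0 U g h (norm x) - Vpot U h (norm (y t x)) (norm x)))"
    and "\<And>t. 0 \<le> t \<Longrightarrow> y t x $ 1 * y' t $ 2 - y t x $ 2 * y' t $ 1 = Mmom h (norm x)"
proof -
  obtain y' where y0: "y 0 x = x" and y': "\<And>t. 0 \<le> t \<Longrightarrow> y t x \<noteq> 0 \<and>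
      ((\<lambda>s. y s x) has_vector_derivative y' t) (at t within {0..}) \<and>
      (y' has_vector_derivative central_force U (y t x)) (at t within {0..})"
    using motion[OF assms] by blast
  obtain \<phi> where \<phi>: "\<And>t. 0 \<le> t \<Longrightarrow> y t x = polar_pt (norm (y t x)) (\<phi> t)"
    "((\<lambda>t. norm (y t x)) has_real_derivative g (norm (y 0 x))) (at 0 within {0..})"
    "(\<phi> has_real_derivative h (norm (y 0 x))) (at 0 within {0..})"
    using initial_velocity[OF assms] unfolding y0 by blast
  have hyps: "0 < g (norm (y 0 x))" "\<And>z. norm (y 0 x) \<le> z \<Longrightarrow> Vpot U h z (norm (y 0 x)) < E0 U g h (norm (y 0 x))"
    using g_pos[OF assms] energy_pos[OF assms] unfolding y0 by auto
  note traj = central_trajectory[where y="\<lambda>s. y s x" and y'=y' and \<phi>=\<phi> and g=g and h=h]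
  show thesis
  proof (rule that[of y'])
    fix t :: real assume t: "0 \<le> t"
    show "((\<lambda>s. y s x) has_vector_derivative y' t) (at t within {0..})" using y'[OF t] by simp
    show "norm x \<le> norm (y t x)"
      using traj(1)[OF U_deriv y' \<phi> hyps t] by (simp add: y0)
    show "escape_time U g h (norm x) (norm (y t x)) = t"
      using traj(2)[OF U_deriv y' \<phi> hyps t] by (simp add: y0)
    show "y t x \<bullet> y' t = norm (y t x) * sqrt (2 * (E0 U g h (norm x) - Vpot U h (norm (y t x)) (norm x)))"
      using traj(3)[OF U_deriv y' \<phi> hyps t] by (simp add: y0)
    show "y t x $ 1 * y' t $ 2 - y t x $ 2 * y' t $ 1 = Mmom h (norm x)"
      using traj(4)[OF U_deriv y' \<phi> hyps t] by (simp add: y0)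
  qed
qed

lemma norm_interval: "a \<in> norm ` \<Lambda> \<Longrightarrow> b \<in> norm ` \<Lambda> \<Longrightarrow> s \<in> {a..b} \<Longrightarrow> s \<in> norm ` \<Lambda>"
  using connected_continuous_image[OF continuous_on_norm_id connected]
  by (auto simp: is_interval_connected_1[symmetric] is_interval_1)

text \<open>A particle starting further out needs less time to reach any given radius, by the escape
  condition; hence particles starting at different radii never share a radius.\<close>
lemma different_radii_stay_different:
  assumes x: "xa \<in> \<Lambda>" "xb \<in> \<Lambda>" "norm xa < norm xb" and "0 \<le> t"
  shows "norm (y t xa) \<noteq> norm (y t xb)"
proof
  assume same: "norm (y t xa) = norm (y t xb)"
  define z where "z = norm (y t xb)"
  have "escape_time U g h (norm xa) z = t"
    using trajectory[OF x(1)] \<open>0 \<le> t\<close> same unfolding z_def by metis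
  moreover have "norm xb \<le> z" "escape_time U g h (norm xb) z = t"
    using trajectory[OF x(2)] \<open>0 \<le> t\<close> unfolding z_def by metis+
  moreover have "norm xb \<noteq> z"
  proof
    assume "norm xb = z"
    then have "t = 0" using \<open>escape_time U g h (norm xb) z = t\<close> by (simp add: escape_time_def)
    then show False
      using same x motion[of xa] \<open>norm xb = z\<close> unfolding z_def by force
  qed
  moreover have "escape_time U g h (norm xb) z < escape_time U g h (norm xa) z"
    if "norm xb < z"
  proof (rule escape_time_strict_antimono[OF x(3) that U_deriv])
    fix s assume "s \<in> {norm xa..norm xb}"
    then obtain xs where xs: "xs \<in> \<Lambda>" "s = norm xs" using norm_interval x by blast
    then show "0 < s" "0 < g s" "g differentiable (at s) \<and> h differentiable (at s)"
      using annulus[OF xs(1)] R1_pos g_pos gh_diff by auto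
    show "Vpot U h w s < E0 U g h s" if "s \<le> w" for w using energy_pos xs that by simp
    show "integral {s..z} (\<lambda>w. deriv (\<lambda>s. 1 / sqrt (2 * (E0 U g h s - Vpot U h w s))) s) < 1 / g s"
      using escape_condition annulus[OF xs(1)] xs \<open>s \<in> _\<close> that by auto
  qed
  ultimately show False by force
qed

lemma equal_radii_meet_imp_eq:
  assumes x: "xa \<in> \<Lambda>" "xb \<in> \<Lambda>" "norm xa = norm xb" and "0 \<le> \<tau>" "y \<tau> xa = y \<tau> xb"
  shows "xa = xb"
proof -
  define r where "r = norm xa"
  obtain ya' where ya: "\<And>t. 0 \<le> t \<Longrightarrow> ((\<lambda>s. y s xa) has_vector_derivative ya' t) (at t within {0..})"
    "\<And>t. 0 \<le> t \<Longrightarrow> r \<le> norm (y t xa)" "\<And>t. 0 \<le> t \<Longrightarrow> escape_time U g h r (norm (y t xa)) = t"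
    "\<And>t. 0 \<le> t \<Longrightarrow> y t xa \<bullet> ya' t = norm (y t xa) * sqrt (2 * (E0 U g h r - Vpot U h (norm (y t xa)) r))"
    "\<And>t. 0 \<le> t \<Longrightarrow> y t xa $ 1 * ya' t $ 2 - y t xa $ 2 * ya' t $ 1 = Mmom h r"
    using trajectory[OF x(1)] unfolding r_def by metis
  obtain yb' where yb: "\<And>t. 0 \<le> t \<Longrightarrow> ((\<lambda>s. y s xb) has_vector_derivative yb' t) (at t within {0..})"
    "\<And>t. 0 \<le> t \<Longrightarrow> r \<le> norm (y t xb)" "\<And>t. 0 \<le> t \<Longrightarrow> escape_time U g h r (norm (y t xb)) = t"
    "\<And>t. 0 \<le> t \<Longrightarrow> y t xb \<bullet> yb' t = norm (y t xb) * sqrt (2 * (E0 U g h r - Vpot U h (norm (y t xb)) r))"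
    "\<And>t. 0 \<le> t \<Longrightarrow> y t xb $ 1 * yb' t $ 2 - y t xb $ 2 * yb' t $ 1 = Mmom h r"
    using trajectory[OF x(2)] x(3) unfolding r_def by metis
  have "0 < r" using annulus[OF x(1)] R1_pos unfolding r_def by linarith
  have norm_eq: "norm (y t xa) = norm (y t xb)" if "0 \<le> t" for t
    using escape_time_strict_mono[OF U_deriv \<open>0 < r\<close> energy_pos[OF x(1), folded r_def]]
      ya(2,3)[OF that] yb(2,3)[OF that] by (metis linorder_neqE_linordered_idom order.irrefl)
  have "y 0 xa = y 0 xb"
  proof (rule planar_motions_meet_imp_same_start[OF ya(1) yb(1) _ norm_eq _ _ assms(4,5)])
    show "y t xa \<noteq> 0" if "0 \<le> t" for t using ya(2)[OF that] \<open>0 < r\<close> by auto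
  qed (simp_all add: ya(4,5) yb(4,5) norm_eq)
  then show ?thesis using motion x by metis
qed

lemma no_collision: "0 \<le> t \<Longrightarrow> x1 \<in> \<Lambda> \<Longrightarrow> x2 \<in> \<Lambda> \<Longrightarrow> x1 \<noteq> x2 \<Longrightarrow> y t x1 \<noteq> y t x2"
  using different_radii_stay_different[of x1 x2 t] different_radii_stay_different[of x2 x1 t]
    equal_radii_meet_imp_eq[of x1 x2 t] by (metis linorder_neqE_linordered_idom)

end

theorem theorem7:
  fixes \<Lambda> :: "(real^2) set"
    and R1 R2 :: real
    and U g h :: "real \<Rightarrow> real"
    and y :: "real \<Rightarrow> real^2 \<Rightarrow> real^2"
  assumes Lam_bounded: "bounded \<Lambda>"
    and Lam_closure: "\<exists>S. open S \<and> connected S \<and> \<Lambda> = closure S"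
    and Lam_boundary: "piecewise_smooth_boundary \<Lambda>"
    and Lam_origin: "0 \<notin> \<Lambda>"
    and R_pos: "0 < R1" "R1 < R2"
    and Lam_annulus: "\<Lambda> \<subseteq> {x. R1 < norm x \<and> norm x < R2}"
    and U_smooth: "\<forall>k. (deriv ^^ k) U differentiable_on {0<..}"
    and solves: "\<forall>x\<in>\<Lambda>. \<exists>y'. y 0 x = x \<and>
        (\<forall>t\<ge>0. y t x \<noteq> 0 \<and>
           ((\<lambda>s. y s x) has_vector_derivative y' t) (at t within {0..}) \<and>
           (y' has_vector_derivative central_force U (y t x)) (at t within {0..}))"
    and init_vel: "\<forall>x\<in>\<Lambda>. \<exists>\<phi>. continuous_on {0..} \<phi> \<and>
        (\<forall>t\<ge>0. y t x = polar_pt (norm (y t x)) (\<phi> t)) \<and>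
        ((\<lambda>t. norm (y t x)) has_real_derivative g (norm x)) (at 0 within {0..}) \<and>
        (\<phi> has_real_derivative h (norm x)) (at 0 within {0..})"
    and g_pos: "\<forall>x\<in>\<Lambda>. g (norm x) > 0"
    and gh_diff: "\<forall>r. R1 < r \<and> r < R2 \<longrightarrow> g differentiable (at r) \<and> h differentiable (at r)"
    and M_cond: "\<forall>r1 r2. R1 < r1 \<and> r1 \<le> r2 \<longrightarrow>
        - deriv U r2 + (Mmom h r1)\<^sup>2 / r2 ^ 3 \<ge> 0"
    and int_cond: "\<forall>r1 r2. R1 < r1 \<and> r1 < R2 \<and> r1 < r2 \<longrightarrow>
        (\<lambda>z. deriv (\<lambda>s. 1 / sqrt (2 * (E0 U g h s - Vpot U h z s))) r1) integrable_on {r1..r2} \<and>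
        integral {r1..r2} (\<lambda>z. deriv (\<lambda>s. 1 / sqrt (2 * (E0 U g h s - Vpot U h z s))) r1)
          < 1 / g r1"
  shows "\<forall>t\<ge>0. \<forall>x1\<in>\<Lambda>. \<forall>x2\<in>\<Lambda>. x1 \<noteq> x2 \<longrightarrow> y t x1 \<noteq> y t x2"
proof -
  have U_deriv: "(U has_real_derivative deriv U z) (at z)" if "0 < z" for z
  proof -
    have "U differentiable (at z within {0<..})"
      using U_smooth[rule_format, of 0] that by (simp add: differentiable_on_def)
    then show ?thesis using at_within_open[of z "{0<..}"] that
      by (simp add: DERIV_deriv_iff_real_differentiable)
  qed
  interpret escaping_particles \<Lambda> R1 R2 U g h y
  proof
    show "connected \<Lambda>" using Lam_closure connected_imp_connected_closure by blast
    show "0 < R1" by (rule R_pos(1))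
  next
    fix x assume "x \<in> \<Lambda>"
    then show "R1 < norm x \<and> norm x < R2" "0 < g (norm x)"
      "\<exists>y'. y 0 x = x \<and> (\<forall>t\<ge>0. y t x \<noteq> 0 \<and>
        ((\<lambda>s. y s x) has_vector_derivative y' t) (at t within {0..}) \<and>
        (y' has_vector_derivative central_force U (y t x)) (at t within {0..}))"
      using Lam_annulus g_pos solves by auto
    show "\<exists>\<phi>. (\<forall>t\<ge>0. y t x = polar_pt (norm (y t x)) (\<phi> t)) \<and>
        ((\<lambda>t. norm (y t x)) has_real_derivative g (norm x)) (at 0 within {0..}) \<and>
        (\<phi> has_real_derivative h (norm x)) (at 0 within {0..})"
      using init_vel \<open>x \<in> \<Lambda>\<close> by blast
  qed (use U_deriv gh_diff M_cond int_cond in auto)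
  show ?thesis using no_collision by blast
qed

end
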